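(* Assume $\alpha\ge2$. With $u_\varepsilon^s$ and $\mathbb A_\varepsilon$ as in the context, as $\varepsilon\to0^+$, $$\int_{R_\varepsilon}\mathbb A_\varepsilon\nabla u^s_\varepsilon\cdot\nabla u^s_\varepsilon\,dx\sim\begin{cases}\tfrac13\kappa^{-1}|\ln\varepsilon|&\text{if }\alpha=2,\\[2pt]\tfrac13\,\varepsilon^{\frac{3}{1+\alpha}-1}\kappa^{-\frac{3}{1+\alpha}}\dfrac{3\pi/(1+\alpha)}{\sin(3\pi/(1+\alpha))}&\text{if }\alpha>2.\end{cases}$$
   Context: Fix $\kappa>0$, $\alpha>0$, $\delta<0$. For $\varepsilon\ge0$: $H_\varepsilon(s)=\kappa|s|^{1+\alpha}+\varepsilon$; $\rho_\varepsilon(\xi_1)=\int_\delta^{\xi_1}ds/H_\varepsilon(s)$ for $\delta\le\xi_1<0$; $\ell_\varepsilon=\lim_{\xi_1\to0^-}\rho_\varepsilon(\xi_1)$ (finite for $\varepsilon>0$, $\ell_0=+\infty$); $\mu_\varepsilon=\rho_\varepsilon^{-1}:[0,\ell_\varepsilon)\to[\delta,0)$; $R_\varepsilon=(0,\ell_\varepsilon)\times(0,1)$. On $R_\varepsilon$, $\mathbb A_\varepsilon(x)=\mathrm{Id}+x_2H_0'(\mu_\varepsilon(x_1))\begin{pmatrix}0&-1\\-1&x_2H_0'(\mu_\varepsilon(x_1))\end{pmatrix}$. Let $\theta\in C^\infty(\mathbb R)$ with $\theta=0$ on $(-\infty,0]$ and $\theta=1$ on $[1,\infty)$, and define on $R_\varepsilon$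 $$u^s_\varepsilon(x)=\theta(x_1)\Big[-\int_0^{x_1}\mu_\varepsilon(s)\,ds+\tfrac12x_2^2\big(H_\varepsilon(\mu_\varepsilon(x_1))-\mu_\varepsilon(x_1)H_0'(\mu_\varepsilon(x_1))\big)\Big].$$ (In the paper $u^s_\varepsilon$ is extended by $0$ to the rest of the transformed domain, so its Dirichlet energy is the integral over $R_\varepsilon$.) *)

theory Defs
  imports "HOL-Analysis.Analysis" "HOL-Library.Landau_Symbols"
begin

text \<open>Parameters: kappa > 0, alpha > 0, delta < 0, eps \<ge> 0.\<close>

definition H :: "real \<Rightarrow> real \<Rightarrow> real \<Rightarrow> real \<Rightarrow> real" where
  "H \<kappa> \<alpha> \<epsilon> s = \<kappa> * \<bar>s\<bar> powr (1 + \<alpha>) + \<epsilon>"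

definition H0' :: "real \<Rightarrow> real \<Rightarrow> real \<Rightarrow> real" where
  "H0' \<kappa> \<alpha> s = deriv (H \<kappa> \<alpha> 0) s"

definition rho :: "real \<Rightarrow> real \<Rightarrow> real \<Rightarrow> real \<Rightarrow> real \<Rightarrow> real" where
  "rho \<kappa> \<alpha> \<delta> \<epsilon> \<xi> = integral {\<delta>..\<xi>} (\<lambda>s. 1 / H \<kappa> \<alpha> \<epsilon> s)"

definition ell :: "real \<Rightarrow> real \<Rightarrow> real \<Rightarrow> real \<Rightarrow> real" where
  "ell \<kappa> \<alpha> \<delta> \<epsilon> = Lim (at_left 0) (rho \<kappa> \<alpha> \<delta> \<epsilon>)"

definition mu :: "real \<Rightarrow> real \<Rightarrow> real \<Rightarrow> real \<Rightarrow> real \<Rightarrow> real" where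
  "mu \<kappa> \<alpha> \<delta> \<epsilon> = inv_into {\<delta>..<0} (rho \<kappa> \<alpha> \<delta> \<epsilon>)"

definition Rect :: "real \<Rightarrow> real \<Rightarrow> real \<Rightarrow> real \<Rightarrow> (real \<times> real) set" where
  "Rect \<kappa> \<alpha> \<delta> \<epsilon> = {0<..<ell \<kappa> \<alpha> \<delta> \<epsilon>} \<times> {0<..<1}"

text \<open>Entries of the matrix A_eps(x) = Id + x2 h [[0,-1],[-1,x2 h]], h = H_0'(mu_eps(x1))\<close>
definition Amat :: "real \<Rightarrow> real \<Rightarrow> real \<Rightarrow> real \<Rightarrow> real \<times> real \<Rightarrow> nat \<Rightarrow> nat \<Rightarrow> real" where
  "Amat \<kappa> \<alpha> \<delta> \<epsilon> x i j =
     (let h = H0' \<kappa> \<alpha> (mu \<kappa> \<alpha> \<delta> \<epsilon> (fst x)); x2 = snd x;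
          M = (\<lambda>i j. if i = 1 \<and> j = 1 then 0
                      else if i = 2 \<and> j = 2 then x2 * h else -1)
      in (if i = j then 1 else 0) + x2 * h * M i j)"

definition smooth :: "(real \<Rightarrow> real) \<Rightarrow> bool" where
  "smooth f \<longleftrightarrow> (\<forall>n x. ((deriv ^^ n) f) differentiable (at x))"

definition us :: "real \<Rightarrow> real \<Rightarrow> real \<Rightarrow> (real \<Rightarrow> real) \<Rightarrow> real \<Rightarrow> real \<times> real \<Rightarrow> real" where
  "us \<kappa> \<alpha> \<delta> \<theta> \<epsilon> x =
     (let x1 = fst x; x2 = snd x; m = mu \<kappa> \<alpha> \<delta> \<epsilon> x1 in
      \<theta> x1 * (- integral {0..x1} (mu \<kappa> \<alpha> \<delta> \<epsilon>)
               + 1/2 * x2\<^sup>2 * (H \<kappa> \<alpha> \<epsilon> m - m * H0' \<kappa> \<alpha> m)))"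

definition grad2 :: "(real \<times> real \<Rightarrow> real) \<Rightarrow> real \<times> real \<Rightarrow> nat \<Rightarrow> real" where
  "grad2 u x i = (if i = 1 then deriv (\<lambda>t. u (t, snd x)) (fst x)
                  else deriv (\<lambda>t. u (fst x, t)) (snd x))"

definition energy_density :: "real \<Rightarrow> real \<Rightarrow> real \<Rightarrow> (real \<Rightarrow> real) \<Rightarrow> real \<Rightarrow> real \<times> real \<Rightarrow> real" where
  "energy_density \<kappa> \<alpha> \<delta> \<theta> \<epsilon> x =
     (\<Sum>i\<in>{1,2::nat}. \<Sum>j\<in>{1,2::nat}.
        Amat \<kappa> \<alpha> \<delta> \<epsilon> x i j * grad2 (us \<kappa> \<alpha> \<delta> \<theta> \<epsilon>) x j * grad2 (us \<kappa> \<alpha> \<delta> \<theta> \<epsilon>) x i)"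

end

theory Submission
  imports Defs "HOL-Real_Asymp.Real_Asymp"
begin

text \<open>
  Let \<open>\<mu>\<^sub>\<epsilon>\<close> be the inverse of \<open>\<rho>\<^sub>\<epsilon>\<close>, so that \<open>\<mu>\<^sub>\<epsilon>' = H\<^sub>\<epsilon>(\<mu>\<^sub>\<epsilon>)\<close>, \<open>\<mu>\<^sub>\<epsilon>(0) = \<delta>\<close> and
  \<open>\<mu>\<^sub>\<epsilon>(\<ell>\<^sub>\<epsilon>) = 0\<close>. Where \<open>x\<^sub>1 \<ge> 1\<close> the cut-off equals 1, \<open>\<partial>\<^sub>1u = -\<mu>\<^sub>\<epsilon> + O(H\<^sub>\<epsilon>(\<mu>\<^sub>\<epsilon>))\<close> and
  \<open>\<partial>\<^sub>2u = O(H\<^sub>\<epsilon>(\<mu>\<^sub>\<epsilon>))\<close>, so the energy density is \<open>\<mu>\<^sub>\<epsilon>(x\<^sub>1)\<^sup>2 + O(H\<^sub>\<epsilon>(\<mu>\<^sub>\<epsilon>(x\<^sub>1)))\<close>; on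
  \<open>x\<^sub>1 \<le> 1\<close> it is bounded. All constants are uniform in \<open>\<epsilon> \<le> 1\<close>, and
  \<open>\<integral>\<^sub>0\<^sup>\<ell> H\<^sub>\<epsilon>(\<mu>\<^sub>\<epsilon>) = -\<delta>\<close>, so the energy is \<open>\<integral>\<^sub>0\<^sup>\<ell> \<mu>\<^sub>\<epsilon>\<^sup>2 + O(1)\<close>.

  Substituting \<open>\<xi> = \<mu>\<^sub>\<epsilon>(t)\<close> gives \<open>\<integral>\<^sub>\<delta>\<^sup>0 \<xi>\<^sup>2 / H\<^sub>\<epsilon>(\<xi>) d\<xi>\<close>. For \<open>\<alpha> = 2\<close> this is
  \<open>(ln(\<kappa>|\<delta>|\<^sup>3 + \<epsilon>) - ln \<epsilon>) / (3\<kappa>)\<close>. For \<open>\<alpha> > 2\<close> the substitution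
  \<open>w = \<kappa>|\<xi>|\<^sup>1\<^sup>+\<^sup>\<alpha> / H\<^sub>\<epsilon>(\<xi>)\<close> makes it \<open>\<kappa>\<^sup>-\<^sup>s \<epsilon>\<^sup>s\<^sup>-\<^sup>1 / (1 + \<alpha>)\<close> times an incomplete Beta
  integral \<open>B\<^sub>w(s, 1 - s)\<close>, \<open>s = 3 / (1 + \<alpha>)\<close>, whose upper limit tends to 1; the reflection
  formula \<open>B(s, 1 - s) = \<pi> / sin(\<pi>s)\<close> gives the constant. Both main terms tend to \<open>\<infinity>\<close>, so the
  \<open>O(1)\<close> error does not affect the asymptotics.
\<close>

lemma asymp_equiv_bounded_perturbation:
  fixes f g h :: "'a \<Rightarrow> real"
  assumes "eventually (\<lambda>x. \<bar>f x - g x\<bar> \<le> C) F" and "g \<sim>[F] h" and "filterlim h at_top F"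
  shows "f \<sim>[F] h"
proof -
  have "(\<lambda>x. f x - g x) \<in> O[F](\<lambda>_. 1)"
    using assms(1) by (intro bigoI[of _ C]) (auto elim!: eventually_mono)
  also have "(\<lambda>_. 1) \<in> o[F](h)"
    using assms(3)
    by (simp add: smallomega_iff_smallo[symmetric] smallomega_1_conv_filterlim filterlim_at_top_imp_at_infinity)
  finally have "(\<lambda>x. f x - g x) \<in> o[F](h)" .
  with assms(2) show ?thesis
    using asymp_equiv_add_right[of "\<lambda>x. f x - g x" F h g] by simp
qed

lemma abs_mult_le_mult: "\<bar>x\<bar> \<le> (X::real) \<Longrightarrow> \<bar>y\<bar> \<le> Y \<Longrightarrow> \<bar>x * y\<bar> \<le> X * Y"
  by (simp add: abs_mult mult_mono')

lemma power2_le_of_abs_le: "\<bar>x\<bar> \<le> (y::real) \<Longrightarrow> x\<^sup>2 \<le> y\<^sup>2"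
  using abs_ge_zero order_trans power2_le_iff_abs_le by blast

lemma abs_square_perturbation_le:
  fixes P c v y H :: real
  assumes P: "0 \<le> P" "P \<le> Pm" and c: "\<bar>c\<bar> \<le> a * H" and v: "\<bar>v\<bar> \<le> b * H"
    and H: "0 \<le> H" "H \<le> M" and y: "y\<^sup>2 \<le> 1"
  shows "\<bar>(P + c)\<^sup>2 + y\<^sup>2 * v\<^sup>2 - P\<^sup>2\<bar> \<le> (2 * Pm * a + a\<^sup>2 * M + b\<^sup>2 * M) * H"
proof -
  have "\<bar>(P + c)\<^sup>2 + y\<^sup>2 * v\<^sup>2 - P\<^sup>2\<bar> = \<bar>2 * P * c + (c\<^sup>2 + y\<^sup>2 * v\<^sup>2)\<bar>"
    by (simp add: power2_eq_square algebra_simps)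
  also have "\<dots> \<le> 2 * P * \<bar>c\<bar> + (c\<^sup>2 + y\<^sup>2 * v\<^sup>2)"
    using abs_triangle_ineq[of "2 * P * c" "c\<^sup>2 + y\<^sup>2 * v\<^sup>2"] P by (simp add: abs_mult)
  also have "\<dots> \<le> 2 * Pm * (a * H) + ((a * H)\<^sup>2 + 1 * (b * H)\<^sup>2)"
  proof (intro add_mono mult_mono)
    show "c\<^sup>2 \<le> (a * H)\<^sup>2" "v\<^sup>2 \<le> (b * H)\<^sup>2"
      using c v by (simp_all add: power2_le_iff_abs_le order_trans[OF abs_ge_zero])
  qed (use P c y in auto)
  also have "\<dots> \<le> (2 * Pm * a + a\<^sup>2 * M + b\<^sup>2 * M) * H"
    using H mult_left_mono[OF H(2), of "a\<^sup>2 * H"] mult_left_mono[OF H(2), of "b\<^sup>2 * H"]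
    by (simp add: power2_eq_square algebra_simps)
  finally show ?thesis .
qed

lemma integral_inverse_square_le_1:
  assumes "0 \<le> (b::real)"
  shows "integral {0..b} (\<lambda>t. 1 / (1 + t)\<^sup>2) \<le> 1"
proof -
  have "((\<lambda>t. 1 / (1 + t)\<^sup>2) has_integral (- 1 / (1 + b) - - 1 / (1 + 0))) {0..b}"
  proof (rule fundamental_theorem_of_calculus[OF assms])
    fix t assume "t \<in> {0..b}"
    then have "((\<lambda>t. - 1 / (1 + t)) has_real_derivative 1 / (1 + t)\<^sup>2) (at t within {0..b})"
      by (auto intro!: derivative_eq_intros simp: power2_eq_square)
    then show "((\<lambda>t. - 1 / (1 + t)) has_vector_derivative 1 / (1 + t)\<^sup>2) (at t within {0..b})"
      by (simp add: has_real_derivative_iff_has_vector_derivative)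
  qed
  then show ?thesis using assms by (simp add: integral_unique)
qed

section \<open>The incomplete Beta function\<close>

lemma Beta_reflection:
  fixes s :: real
  assumes "0 < s" "s < 1"
  shows "Beta s (1 - s) = pi / sin (pi * s)"
proof -
  have "complex_of_real (Gamma s * Gamma (1 - s)) = of_real pi / sin (of_real pi * of_real s)"
    using Gamma_reflection_complex[of "of_real s"] Gamma_complex_of_real[of "1 - s"]
    by (simp add: Gamma_complex_of_real)
  also have "\<dots> = of_real (pi / sin (pi * s))"
    by (simp flip: sin_of_real)
  finally show ?thesis
    by (simp only: of_real_eq_iff) (simp add: Beta_def)
qed

definition incomplete_Beta :: "real \<Rightarrow> real \<Rightarrow> real \<Rightarrow> real" where
  "incomplete_Beta a b w = integral {0..w} (\<lambda>u. u powr (a - 1) * (1 - u) powr (b - 1))"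

lemma incomplete_Beta_0 [simp]: "incomplete_Beta a b 0 = 0"
  by (simp add: incomplete_Beta_def)

context
  fixes a b :: real
  assumes a: "a > 0" and b: "b > 0"
begin

lemma incomplete_Beta_1: "incomplete_Beta a b 1 = Beta a b"
  using has_integral_Beta_real[OF a b] by (simp add: incomplete_Beta_def integral_unique)

lemma continuous_on_incomplete_Beta: "continuous_on {0..1} (incomplete_Beta a b)"
  unfolding incomplete_Beta_def[abs_def]
  by (intro indefinite_integral_continuous_1 integrable_Beta' a b)

lemma has_real_derivative_incomplete_Beta:
  assumes w: "0 < w" "w < 1"
  shows "(incomplete_Beta a b has_real_derivative w powr (a - 1) * (1 - w) powr (b - 1)) (at w)"
proof -
  have "isCont (\<lambda>u. u powr (a - 1) * (1 - u) powr (b - 1)) w"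
    using w by (intro continuous_intros) auto
  then have "((\<lambda>v. integral {0..v} (\<lambda>u. u powr (a - 1) * (1 - u) powr (b - 1)))
      has_vector_derivative w powr (a - 1) * (1 - w) powr (b - 1)) (at w within {0..1} - {})"
    using w by (intro integral_has_vector_derivative_continuous_at integrable_Beta' a b)
               (auto intro: continuous_at_imp_continuous_within)
  moreover have "at w within {0..1} - {} = at w"
    using w by (intro at_within_interior) auto
  ultimately show ?thesis
    by (simp add: incomplete_Beta_def[abs_def] has_real_derivative_iff_has_vector_derivative)
qed

end

text \<open>The substitution \<open>w = \<kappa>t\<^sup>q / (\<kappa>t\<^sup>q + \<epsilon>)\<close> turns \<open>\<integral> t\<^sup>s\<^sup>q\<^sup>-\<^sup>1 / (\<kappa>t\<^sup>q + \<epsilon>) dt\<close> into an incomplete Beta integral.\<close>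
lemma has_real_derivative_incomplete_Beta_substitution:
  fixes \<kappa> \<epsilon> q s t :: real
  assumes \<kappa>: "\<kappa> > 0" and \<epsilon>: "\<epsilon> > 0" and q: "q > 0" and s: "0 < s" "s < 1" and t: "t > 0"
  shows "((\<lambda>t. \<kappa> powr (-s) * \<epsilon> powr (s - 1) / q
                 * incomplete_Beta s (1 - s) (\<kappa> * t powr q / (\<kappa> * t powr q + \<epsilon>)))
          has_real_derivative t powr (s * q - 1) / (\<kappa> * t powr q + \<epsilon>)) (at t)"
proof -
  define H where "H = \<kappa> * t powr q + \<epsilon>"
  define w where "w = \<kappa> * t powr q / H"
  have H: "H > 0" using \<kappa> \<epsilon> by (simp add: H_def add_nonneg_pos)
  have w: "0 < w" "w < 1" and one_minus_w: "1 - w = \<epsilon> / H"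
    using \<kappa> \<epsilon> t H by (auto simp: w_def H_def field_simps)
  have dw: "((\<lambda>t. \<kappa> * t powr q / (\<kappa> * t powr q + \<epsilon>)) has_real_derivative
          \<kappa> * q * t powr (q - 1) * \<epsilon> / H\<^sup>2) (at t)"
    using t H by (auto intro!: derivative_eq_intros simp: H_def power2_eq_square field_simps)
  have dB: "(incomplete_Beta s (1 - s) has_real_derivative w powr (s - 1) * (\<epsilon> / H) powr (-s))
      (at (\<kappa> * t powr q / (\<kappa> * t powr q + \<epsilon>)))"
    using has_real_derivative_incomplete_Beta[of s "1 - s" w] s w
    by (simp add: one_minus_w H_def[symmetric] w_def[symmetric])
  have "((\<lambda>t. \<kappa> powr (-s) * \<epsilon> powr (s - 1) / q
                 * incomplete_Beta s (1 - s) (\<kappa> * t powr q / (\<kappa> * t powr q + \<epsilon>)))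
          has_real_derivative \<kappa> powr (-s) * \<epsilon> powr (s - 1) / q
            * (w powr (s - 1) * (\<epsilon> / H) powr (-s) * (\<kappa> * q * t powr (q - 1) * \<epsilon> / H\<^sup>2))) (at t)"
    by (rule DERIV_cmult[OF DERIV_chain2[OF dB dw]])
  moreover have "(\<kappa> * t powr q / H) powr (s - 1) = \<kappa> powr (s - 1) * t powr (q * (s - 1)) / H powr (s - 1)"
    using \<kappa> t H by (simp add: powr_divide powr_mult powr_powr)
  moreover have "(\<epsilon> / H) powr (-s) = \<epsilon> powr (-s) * H powr s"
    using \<epsilon> H by (simp add: powr_divide powr_minus field_simps)
  ultimately have "((\<lambda>t. \<kappa> powr (-s) * \<epsilon> powr (s - 1) / q
                 * incomplete_Beta s (1 - s) (\<kappa> * t powr q / (\<kappa> * t powr q + \<epsilon>)))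
          has_real_derivative (\<kappa> powr (-s) * \<kappa> powr (s - 1) * \<kappa>) * (\<epsilon> powr (s - 1) * \<epsilon> powr (-s) * \<epsilon>)
            * (t powr (q * (s - 1)) * t powr (q - 1)) * (H powr s / (H powr (s - 1) * H\<^sup>2))) (at t)"
    using q by (simp add: w_def field_simps)
  also have "(\<kappa> powr (-s) * \<kappa> powr (s - 1) * \<kappa>) * (\<epsilon> powr (s - 1) * \<epsilon> powr (-s) * \<epsilon>)
            * (t powr (q * (s - 1)) * t powr (q - 1)) * (H powr s / (H powr (s - 1) * H\<^sup>2))
      = t powr (s * q - 1) / H"
    using \<kappa> \<epsilon> t H
    by (simp add: powr_add[symmetric] powr_diff algebra_simps power2_eq_square) (simp add: powr_add)
  finally show ?thesis unfolding H_def .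
qed

section \<open>The inverse profile\<close>

lemma H0'_neg:
  assumes "s < 0" "\<alpha> > 0"
  shows "H0' \<kappa> \<alpha> s = - \<kappa> * (1 + \<alpha>) * (-s) powr \<alpha>"
proof -
  have "((\<lambda>t. \<kappa> * (-t) powr (1 + \<alpha>)) has_real_derivative - \<kappa> * (1 + \<alpha>) * (-s) powr \<alpha>) (at s)"
    using assms by (auto intro!: derivative_eq_intros)
  then have "(H \<kappa> \<alpha> 0 has_real_derivative - \<kappa> * (1 + \<alpha>) * (-s) powr \<alpha>) (at s)"
    by (rule has_field_derivative_transform_within_open[where S="{..<0}"])
       (use assms in \<open>auto simp: H_def\<close>)
  then show ?thesis unfolding H0'_def by (rule DERIV_imp_deriv)
qed

locale profile =
  fixes \<kappa> \<alpha> \<delta> :: real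
  assumes \<kappa>_pos: "\<kappa> > 0" and \<alpha>_pos: "\<alpha> > 0" and \<delta>_neg: "\<delta> < 0"

locale regularized_profile = profile +
  fixes \<epsilon> :: real
  assumes \<epsilon>_pos: "\<epsilon> > 0"
begin

abbreviation "H\<epsilon> \<equiv> H \<kappa> \<alpha> \<epsilon>"
abbreviation "\<rho> \<equiv> rho \<kappa> \<alpha> \<delta> \<epsilon>"

definition "L = \<rho> 0"

text \<open>Unlike \<open>mu\<close>, which inverts \<open>\<rho>\<close> on \<open>[\<delta>, 0)\<close> only, this inverse is continuous up to \<open>L\<close>;
  the two agree on \<open>[0, L)\<close>.\<close>
definition "\<mu> = inv_into {\<delta>..0} \<rho>"

lemma H_ge: "H\<epsilon> s \<ge> \<epsilon>"
  using \<kappa>_pos by (simp add: H_def)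

lemma H_pos: "H\<epsilon> s > 0"
  using H_ge[of s] \<epsilon>_pos by linarith

lemma continuous_on_H: "continuous_on S H\<epsilon>"
  unfolding H_def using \<alpha>_pos by (intro continuous_intros continuous_on_powr') auto

lemma rho_has_real_derivative_within:
  "x \<in> {\<delta>..1} \<Longrightarrow> (\<rho> has_real_derivative 1 / H\<epsilon> x) (at x within {\<delta>..1})"
  unfolding rho_def[abs_def]
  using continuous_on_H H_pos by (intro integral_has_real_derivative continuous_intros) (auto simp: less_imp_neq[symmetric])

lemma continuous_on_rho: "continuous_on {\<delta>..1} \<rho>"
  unfolding continuous_on_eq_continuous_within
  using rho_has_real_derivative_within DERIV_continuous by blast

lemma rho_has_real_derivative: "\<delta> < x \<Longrightarrow> x < 1 \<Longrightarrow> (\<rho> has_real_derivative 1 / H\<epsilon> x) (at x)"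
  using rho_has_real_derivative_within[of x] at_within_interior[of x "{\<delta>..1}"] by simp

lemma rho_delta [simp]: "\<rho> \<delta> = 0"
  by (simp add: rho_def)

lemma rho_strict_mono:
  assumes "\<delta> \<le> x" "x < y" "y \<le> 1"
  shows "\<rho> x < \<rho> y"
proof -
  have "continuous_on {x..y} \<rho>"
    using continuous_on_rho by (rule continuous_on_subset) (use assms in auto)
  moreover have "\<exists>D. (\<rho> has_real_derivative D) (at z) \<and> 0 < D" if "x < z" "z < y" for z
    using assms that rho_has_real_derivative[of z] H_pos[of z] by auto
  ultimately show ?thesis
    using DERIV_pos_imp_increasing_open[OF \<open>x < y\<close>] by blast
qed

lemma L_pos: "L > 0"
  using rho_strict_mono[of \<delta> 0] \<delta>_neg by (simp add: L_def)

lemma ell_eq_L: "ell \<kappa> \<alpha> \<delta> \<epsilon> = L"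
proof -
  have "isCont \<rho> 0" using rho_has_real_derivative[of 0] \<delta>_neg DERIV_isCont by simp
  then have "(\<rho> \<longlongrightarrow> \<rho> 0) (at_left 0)"
    by (simp add: continuous_at filterlim_at_split)
  then show ?thesis unfolding ell_def L_def by (intro tendsto_Lim) auto
qed

lemma inj_on_rho: "inj_on \<rho> {\<delta>..0}"
  by (rule strict_mono_on_imp_inj_on) (auto simp: strict_mono_on_def intro!: rho_strict_mono)

lemma rho_image: "\<rho> ` {\<delta>..0} = {0..L}"
proof
  show "\<rho> ` {\<delta>..0} \<subseteq> {0..L}"
  proof clarify
    fix x assume "x \<in> {\<delta>..0}"
    then have "\<rho> \<delta> \<le> \<rho> x" "\<rho> x \<le> \<rho> 0"
      using rho_strict_mono[of \<delta> x] rho_strict_mono[of x 0] by (cases "x = \<delta>", auto, cases "x = 0", auto)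
    then show "\<rho> x \<in> {0..L}" by (simp add: L_def)
  qed
  show "{0..L} \<subseteq> \<rho> ` {\<delta>..0}"
  proof
    fix y assume "y \<in> {0..L}"
    moreover have "continuous_on {\<delta>..0} \<rho>"
      using continuous_on_rho by (rule continuous_on_subset) auto
    ultimately obtain x where "\<delta> \<le> x" "x \<le> 0" "\<rho> x = y"
      using IVT'[of \<rho> \<delta> y 0] \<delta>_neg by (auto simp: L_def)
    then show "y \<in> \<rho> ` {\<delta>..0}" by auto
  qed
qed

lemma mu_mem: "y \<in> {0..L} \<Longrightarrow> \<mu> y \<in> {\<delta>..0}"
  unfolding \<mu>_def using rho_image by (metis inv_into_into)

lemma rho_mu: "y \<in> {0..L} \<Longrightarrow> \<rho> (\<mu> y) = y"
  unfolding \<mu>_def using rho_image by (metis f_inv_into_f)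

lemma mu_rho: "x \<in> {\<delta>..0} \<Longrightarrow> \<mu> (\<rho> x) = x"
  unfolding \<mu>_def using inj_on_rho by (simp add: inv_into_f_f)

lemma mu_0: "\<mu> 0 = \<delta>"
  using mu_rho[of \<delta>] \<delta>_neg by simp

lemma mu_L: "\<mu> L = 0"
  using mu_rho[of 0] \<delta>_neg by (simp add: L_def)

lemma mu_neg: "y \<in> {0..<L} \<Longrightarrow> \<mu> y < 0"
  using mu_mem[of y] rho_mu[of y] by (cases "\<mu> y = 0") (auto simp: L_def)

lemma mu_gt: "y \<in> {0<..L} \<Longrightarrow> \<mu> y > \<delta>"
  using mu_mem[of y] rho_mu[of y] by (cases "\<mu> y = \<delta>") auto

lemma continuous_on_mu: "continuous_on {0..L} \<mu>"
proof -
  have "continuous_on (\<rho> ` {\<delta>..0}) \<mu>"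
    using continuous_on_subset[OF continuous_on_rho] mu_rho by (intro continuous_on_inv) auto
  then show ?thesis using rho_image by simp
qed

lemma mu_has_real_derivative:
  assumes y: "0 < y" "y < L"
  shows "(\<mu> has_real_derivative H\<epsilon> (\<mu> y)) (at y)"
proof -
  have "(\<mu> has_real_derivative inverse (1 / H\<epsilon> (\<mu> y))) (at y)"
  proof (rule DERIV_inverse_function[where a=0 and b=L])
    show "(\<rho> has_real_derivative 1 / H\<epsilon> (\<mu> y)) (at (\<mu> y))"
      using y mu_neg[of y] mu_gt[of y] by (intro rho_has_real_derivative) auto
    show "isCont \<mu> y"
      using continuous_on_interior[OF continuous_on_mu, of y] y by simp
  qed (use y H_pos[of "\<mu> y"] rho_mu in auto)
  then show ?thesis by simp
qed

lemma mu_eq: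
  assumes "y \<in> {0..<L}"
  shows "mu \<kappa> \<alpha> \<delta> \<epsilon> y = \<mu> y"
proof -
  have "inj_on \<rho> {\<delta>..<0}"
    using inj_on_rho by (rule inj_on_subset) auto
  then show ?thesis
    unfolding mu_def using assms mu_mem[of y] mu_neg[of y] rho_mu[of y]
    by (intro inv_into_f_eq) auto
qed


lemma integral_H_mu: "integral {0..L} (\<lambda>t. H\<epsilon> (\<mu> t)) = - \<delta>"
proof -
  have "((\<lambda>t. H\<epsilon> (\<mu> t)) has_integral (\<mu> L - \<mu> 0)) {0..L}"
    using L_pos continuous_on_mu mu_has_real_derivative
    by (intro fundamental_theorem_of_calculus_interior)
       (auto simp: has_real_derivative_iff_has_vector_derivative[symmetric])
  then show ?thesis using mu_0 mu_L by (simp add: integral_unique)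
qed

lemma integral_mu_sq_eq:
  assumes cont: "continuous_on {0..-\<delta>} \<Phi>"
    and deriv: "\<And>t. 0 < t \<Longrightarrow> t < -\<delta> \<Longrightarrow> (\<Phi> has_real_derivative t\<^sup>2 / (\<kappa> * t powr (1 + \<alpha>) + \<epsilon>)) (at t)"
  shows "integral {0..L} (\<lambda>t. (\<mu> t)\<^sup>2) = \<Phi> (-\<delta>) - \<Phi> 0"
proof -
  have "((\<lambda>t. (\<mu> t)\<^sup>2) has_integral (- \<Phi> (- \<mu> L) - - \<Phi> (- \<mu> 0))) {0..L}"
  proof (rule fundamental_theorem_of_calculus_interior)
    show "continuous_on {0..L} (\<lambda>t. - \<Phi> (- \<mu> t))"
      using mu_mem by (intro continuous_intros continuous_on_compose2[OF cont] continuous_on_mu) auto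
    fix t assume t: "t \<in> {0<..<L}"
    have m: "0 < - \<mu> t" "- \<mu> t < - \<delta>" using mu_gt[of t] mu_neg[of t] t by auto
    have "H\<epsilon> (\<mu> t) = \<kappa> * (- \<mu> t) powr (1 + \<alpha>) + \<epsilon>" using m by (simp add: H_def)
    then have "((\<lambda>t. \<Phi> (- \<mu> t)) has_real_derivative (\<mu> t)\<^sup>2 / H\<epsilon> (\<mu> t) * - H\<epsilon> (\<mu> t)) (at t)"
      using DERIV_chain2[OF deriv[OF m] DERIV_minus[OF mu_has_real_derivative]] t by simp
    then have "((\<lambda>t. - \<Phi> (- \<mu> t)) has_real_derivative (\<mu> t)\<^sup>2) (at t)"
      using DERIV_minus H_pos[of "\<mu> t"] by fastforce
    then show "((\<lambda>t. - \<Phi> (- \<mu> t)) has_vector_derivative (\<mu> t)\<^sup>2) (at t)"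
      by (simp add: has_real_derivative_iff_has_vector_derivative)
  qed (use L_pos in simp)
  then show ?thesis using mu_0 mu_L by (simp add: integral_unique)
qed

lemma integral_mu_sq: "integral {0..ell \<kappa> \<alpha> \<delta> \<epsilon>} (\<lambda>t. (mu \<kappa> \<alpha> \<delta> \<epsilon> t)\<^sup>2) = integral {0..L} (\<lambda>t. (\<mu> t)\<^sup>2)"
  unfolding ell_eq_L by (rule integral_spike[of "{L}"]) (auto simp: mu_eq)

lemma integral_mu_sq_alpha_2:
  assumes "\<alpha> = 2"
  shows "integral {0..L} (\<lambda>t. (\<mu> t)\<^sup>2) = (ln (\<kappa> * (-\<delta>) ^ 3 + \<epsilon>) - ln \<epsilon>) / (3 * \<kappa>)"
proof -
  have pos: "\<kappa> * t ^ 3 + \<epsilon> > 0" if "t \<ge> 0" for t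
    using \<kappa>_pos \<epsilon>_pos that by (simp add: add_nonneg_pos)
  have "integral {0..L} (\<lambda>t. (\<mu> t)\<^sup>2) =
      ln (\<kappa> * (-\<delta>) ^ 3 + \<epsilon>) / (3 * \<kappa>) - ln (\<kappa> * 0 ^ 3 + \<epsilon>) / (3 * \<kappa>)"
  proof (rule integral_mu_sq_eq)
    show "continuous_on {0..-\<delta>} (\<lambda>t. ln (\<kappa> * t ^ 3 + \<epsilon>) / (3 * \<kappa>))"
      using pos \<kappa>_pos by (intro continuous_intros) (auto simp: less_imp_neq[symmetric])
    fix t :: real assume t: "0 < t"
    have "((\<lambda>t. ln (\<kappa> * t ^ 3 + \<epsilon>) / (3 * \<kappa>)) has_real_derivative
        \<kappa> * (3 * t\<^sup>2) / (\<kappa> * t ^ 3 + \<epsilon>) / (3 * \<kappa>)) (at t)"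
      using pos[of t] t by (intro DERIV_cdivide DERIV_ln_divide) (auto intro!: derivative_eq_intros)
    moreover have "t powr (1 + \<alpha>) = t ^ 3"
      using t assms by (simp add: powr_numeral)
    moreover have "\<kappa> * (3 * t\<^sup>2) / X / (3 * \<kappa>) = t\<^sup>2 / X" for X
      using \<kappa>_pos by (simp add: divide_divide_eq_left)
    ultimately show "((\<lambda>t. ln (\<kappa> * t ^ 3 + \<epsilon>) / (3 * \<kappa>)) has_real_derivative
        t\<^sup>2 / (\<kappa> * t powr (1 + \<alpha>) + \<epsilon>)) (at t)"
      by (simp only:)
  qed
  then show ?thesis by (simp add: diff_divide_distrib)
qed

lemma integral_mu_sq_alpha_gt_2:
  assumes "\<alpha> > 2"
  defines "s \<equiv> 3 / (1 + \<alpha>)"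
  shows "integral {0..L} (\<lambda>t. (\<mu> t)\<^sup>2) = \<kappa> powr (-s) * \<epsilon> powr (s - 1) / (1 + \<alpha>)
           * incomplete_Beta s (1 - s) (\<kappa> * (-\<delta>) powr (1 + \<alpha>) / (\<kappa> * (-\<delta>) powr (1 + \<alpha>) + \<epsilon>))"
proof -
  define \<Phi> where "\<Phi> t = \<kappa> powr (-s) * \<epsilon> powr (s - 1) / (1 + \<alpha>)
           * incomplete_Beta s (1 - s) (\<kappa> * t powr (1 + \<alpha>) / (\<kappa> * t powr (1 + \<alpha>) + \<epsilon>))" for t
  have s: "0 < s" "s < 1" "s * (1 + \<alpha>) - 1 = 2"
    using assms(1) by (auto simp: s_def field_simps add_pos_pos less_imp_neq[symmetric])
  have pos: "\<kappa> * t powr (1 + \<alpha>) + \<epsilon> > 0" for t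
    using \<kappa>_pos \<epsilon>_pos by (simp add: add_nonneg_pos)
  have "integral {0..L} (\<lambda>t. (\<mu> t)\<^sup>2) = \<Phi> (-\<delta>) - \<Phi> 0"
  proof (rule integral_mu_sq_eq)
    have cp: "continuous_on {0..-\<delta>} (\<lambda>t. \<kappa> * t powr (1 + \<alpha>))"
      using \<alpha>_pos by (intro continuous_on_powr' continuous_intros) auto
    have "continuous_on {0..-\<delta>} (\<lambda>t. \<kappa> * t powr (1 + \<alpha>) / (\<kappa> * t powr (1 + \<alpha>) + \<epsilon>))"
      by (rule continuous_on_divide[OF cp continuous_on_add[OF cp continuous_on_const]])
         (use pos in \<open>metis less_irrefl\<close>)
    moreover have "(\<lambda>t. \<kappa> * t powr (1 + \<alpha>) / (\<kappa> * t powr (1 + \<alpha>) + \<epsilon>)) ` {0..-\<delta>} \<subseteq> {0..1}"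
      using pos \<kappa>_pos \<epsilon>_pos by (auto simp: divide_le_eq_1 less_imp_le)
    ultimately have "continuous_on {0..-\<delta>}
        (\<lambda>t. incomplete_Beta s (1 - s) (\<kappa> * t powr (1 + \<alpha>) / (\<kappa> * t powr (1 + \<alpha>) + \<epsilon>)))"
      using s by (intro continuous_on_compose2[OF continuous_on_incomplete_Beta]) auto
    then show "continuous_on {0..-\<delta>} \<Phi>"
      unfolding \<Phi>_def by (intro continuous_intros)
    fix t :: real assume "0 < t"
    then have "t powr (s * (1 + \<alpha>) - 1) = t\<^sup>2"
      using s(3) by (simp add: powr_numeral)
    then show "(\<Phi> has_real_derivative t\<^sup>2 / (\<kappa> * t powr (1 + \<alpha>) + \<epsilon>)) (at t)"
      using has_real_derivative_incomplete_Beta_substitution[of \<kappa> \<epsilon> "1 + \<alpha>" s t]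
        \<open>0 < t\<close> \<kappa>_pos \<epsilon>_pos \<alpha>_pos s(1,2)
      unfolding \<Phi>_def by simp
  qed
  then show ?thesis using \<alpha>_pos by (simp add: \<Phi>_def)
qed

end

section \<open>The energy density\<close>

locale cutoff_profile = profile +
  fixes \<theta> :: "real \<Rightarrow> real"
  assumes smooth_\<theta>: "smooth \<theta>" and \<theta>_eq_1: "\<And>t. t \<ge> 1 \<Longrightarrow> \<theta> t = 1"
begin

lemma \<theta>_has_real_derivative: "(\<theta> has_real_derivative deriv \<theta> t) (at t)"
  using smooth_\<theta> unfolding smooth_def
  by (metis DERIV_deriv_iff_real_differentiable funpow_0)

lemma deriv_\<theta>_has_real_derivative: "(deriv \<theta> has_real_derivative deriv (deriv \<theta>) t) (at t)"
  using smooth_\<theta> unfolding smooth_def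
  by (metis DERIV_deriv_iff_real_differentiable funpow_0 funpow_Suc_right o_apply)

lemma continuous_on_\<theta>: "continuous_on S \<theta>"
  using \<theta>_has_real_derivative DERIV_isCont continuous_at_imp_continuous_on by blast

lemma continuous_on_deriv_\<theta>: "continuous_on S (deriv \<theta>)"
  using deriv_\<theta>_has_real_derivative DERIV_isCont continuous_at_imp_continuous_on by blast

lemma deriv_\<theta>_eq_0:
  assumes "t \<ge> 1"
  shows "deriv \<theta> t = 0"
proof -
  have gt: "deriv \<theta> s = 0" if "s > 1" for s
  proof -
    have "(\<theta> has_real_derivative 0) (at s)"
      by (rule has_field_derivative_transform_within_open[where f="\<lambda>_. 1" and S="{1<..}"])
         (use that \<theta>_eq_1 in auto)
    then show ?thesis by (rule DERIV_imp_deriv)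
  qed
  then have "\<forall>\<^sub>F s in at_right 1. deriv \<theta> s = 0"
    by (auto simp: eventually_at_right_less eventually_at_right_field intro: exI[of _ 2])
  moreover have "(deriv \<theta> \<longlongrightarrow> deriv \<theta> 1) (at_right 1)"
    using continuous_on_deriv_\<theta>[of UNIV] by (simp add: continuous_on_def filterlim_at_split)
  ultimately have "deriv \<theta> 1 = 0"
    using tendsto_unique[of "at_right 1" "deriv \<theta>"] tendsto_eventually by (metis trivial_limit_at_right_real)
  with gt assms show ?thesis by (cases "t = 1") auto
qed

definition "B\<theta> = Sup ((\<lambda>t. \<bar>\<theta> t\<bar> + \<bar>deriv \<theta> t\<bar>) ` {0..1})"

lemma abs_\<theta>_le: "t \<in> {0..1} \<Longrightarrow> \<bar>\<theta> t\<bar> \<le> B\<theta>"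
  and abs_deriv_\<theta>_le: "t \<in> {0..1} \<Longrightarrow> \<bar>deriv \<theta> t\<bar> \<le> B\<theta>"
proof -
  assume t: "t \<in> {0..1}"
  have "continuous_on {0..1} (\<lambda>t. \<bar>\<theta> t\<bar> + \<bar>deriv \<theta> t\<bar>)"
    by (intro continuous_intros continuous_on_\<theta> continuous_on_deriv_\<theta>)
  then have "bdd_above ((\<lambda>t. \<bar>\<theta> t\<bar> + \<bar>deriv \<theta> t\<bar>) ` {0..1})"
    by (intro bounded_imp_bdd_above compact_imp_bounded compact_continuous_image) auto
  then have "\<bar>\<theta> t\<bar> + \<bar>deriv \<theta> t\<bar> \<le> B\<theta>"
    unfolding B\<theta>_def using t by (rule cSUP_upper2) simp
  then show "\<bar>\<theta> t\<bar> \<le> B\<theta>" "\<bar>deriv \<theta> t\<bar> \<le> B\<theta>" by auto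
qed

text \<open>Bounds valid for every \<open>\<epsilon> \<le> 1\<close>; none of these constants depends on \<open>\<epsilon>\<close>.\<close>

definition "pmax = - \<delta>"
definition "Hmax = \<kappa> * pmax powr (1 + \<alpha>) + 1"
definition "Vmax = (1 + \<alpha>) * Hmax"
definition "V'max = \<kappa> * \<alpha> * (1 + \<alpha>) * pmax powr \<alpha> * Hmax"
definition "hmax = \<kappa> * (1 + \<alpha>) * pmax powr \<alpha>"

definition "far_coeff = \<kappa> * (1 + \<alpha>) * pmax powr \<alpha> * (\<alpha> / 2 + 1 + \<alpha>)"
definition "far_const = 2 * pmax * far_coeff + far_coeff\<^sup>2 * Hmax + (1 + \<alpha>)\<^sup>2 * Hmax"
definition "near_const =
  (B\<theta> * (2 * pmax + Vmax / 2 + V'max / 2) + hmax * (B\<theta> * Vmax))\<^sup>2 + (B\<theta> * Vmax)\<^sup>2 + pmax\<^sup>2"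

lemma pmax_pos: "pmax > 0"
  using \<delta>_neg by (simp add: pmax_def)

lemma Hmax_ge_1: "Hmax \<ge> 1"
  using \<kappa>_pos by (simp add: Hmax_def)

lemma far_const_nonneg: "far_const \<ge> 0"
  using \<kappa>_pos \<alpha>_pos pmax_pos Hmax_ge_1 by (simp add: far_const_def far_coeff_def)

lemma near_const_nonneg: "near_const \<ge> 0"
  by (simp add: near_const_def)

end

locale regularized_cutoff = regularized_profile \<kappa> \<alpha> \<delta> \<epsilon> + cutoff_profile \<kappa> \<alpha> \<delta> \<theta>
  for \<kappa> \<alpha> \<delta> \<epsilon> \<theta>
begin

text \<open>With \<open>p = -\<mu> > 0\<close>, \<open>V = H\<^sub>\<epsilon>(\<mu>) - \<mu> H\<^sub>0'(\<mu>)\<close> and \<open>h = H\<^sub>0'(\<mu>)\<close> are the coefficients of \<open>u\<^sup>s\<^sub>\<epsilon>\<close> and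
  \<open>\<bbbA>\<^sub>\<epsilon>\<close>, and \<open>du1\<close>, \<open>du2\<close> are the partial derivatives of \<open>u\<^sup>s\<^sub>\<epsilon>\<close>. The quadratic form of
  \<open>\<bbbA>\<^sub>\<epsilon>\<close> is \<open>(\<zeta>\<^sub>1 - x\<^sub>2 h \<zeta>\<^sub>2)\<^sup>2 + \<zeta>\<^sub>2\<^sup>2\<close>.\<close>

definition "I t = integral {0..t} \<mu>"
definition "p t = - \<mu> t"
definition "V t = \<epsilon> - \<kappa> * \<alpha> * p t powr (1 + \<alpha>)"
definition "V' t = \<kappa> * \<alpha> * (1 + \<alpha>) * p t powr \<alpha> * H\<epsilon> (\<mu> t)"
definition "h t = - \<kappa> * (1 + \<alpha>) * p t powr \<alpha>"
definition "du1 x\<^sub>1 x\<^sub>2 = deriv \<theta> x\<^sub>1 * (- I x\<^sub>1 + 1/2 * x\<^sub>2\<^sup>2 * V x\<^sub>1) + \<theta> x\<^sub>1 * (p x\<^sub>1 + 1/2 * x\<^sub>2\<^sup>2 * V' x\<^sub>1)"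
definition "du2 x\<^sub>1 x\<^sub>2 = \<theta> x\<^sub>1 * x\<^sub>2 * V x\<^sub>1"
definition "energy x =
  (du1 (fst x) (snd x) - snd x * h (fst x) * du2 (fst x) (snd x))\<^sup>2 + (du2 (fst x) (snd x))\<^sup>2"

lemma p_pos: "t \<in> {0..<L} \<Longrightarrow> p t > 0"
  using mu_neg by (simp add: p_def)

lemma H_mu: "t \<in> {0..L} \<Longrightarrow> H\<epsilon> (\<mu> t) = \<kappa> * p t powr (1 + \<alpha>) + \<epsilon>"
  using mu_mem[of t] by (simp add: H_def p_def)

lemma us_eq:
  assumes t: "t \<in> {0..<L}"
  shows "us \<kappa> \<alpha> \<delta> \<theta> \<epsilon> (t, y) = \<theta> t * (- I t + 1/2 * y\<^sup>2 * V t)"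
proof -
  have "integral {0..t} (mu \<kappa> \<alpha> \<delta> \<epsilon>) = I t"
    unfolding I_def using t by (intro integral_cong) (auto simp: mu_eq)
  moreover have "H\<epsilon> (\<mu> t) - \<mu> t * H0' \<kappa> \<alpha> (\<mu> t) = V t"
  proof -
    have h0: "H0' \<kappa> \<alpha> (\<mu> t) = - \<kappa> * (1 + \<alpha>) * p t powr \<alpha>"
      using H0'_neg[of "\<mu> t" \<alpha> \<kappa>] mu_neg[of t] t \<alpha>_pos by (simp add: p_def)
    have HV: "H\<epsilon> (\<mu> t) = \<kappa> * p t * p t powr \<alpha> + \<epsilon>" "V t = \<epsilon> - \<kappa> * \<alpha> * p t * p t powr \<alpha>"
      using H_mu[of t] p_pos[of t] t by (simp_all add: V_def powr_add)
    show ?thesis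
      by (simp only: h0 HV) (simp add: p_def algebra_simps)
  qed
  ultimately show ?thesis
    using mu_eq[OF t] by (simp add: us_def Let_def)
qed

lemma I_has_real_derivative:
  assumes "0 < t" "t < L"
  shows "(I has_real_derivative \<mu> t) (at t)"
proof -
  have "(I has_real_derivative \<mu> t) (at t within {0..L})"
    unfolding I_def[abs_def] using assms by (intro integral_has_real_derivative continuous_on_mu) auto
  moreover have "at t within {0..L} = at t"
    using assms by (intro at_within_interior) simp
  ultimately show ?thesis by simp
qed

lemma V_has_real_derivative:
  assumes "0 < t" "t < L"
  shows "(V has_real_derivative V' t) (at t)"
proof -
  have "V = (\<lambda>t. \<epsilon> - \<kappa> * \<alpha> * (- \<mu> t) powr (1 + \<alpha>))"
    by (simp add: V_def p_def fun_eq_iff)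
  moreover have "((\<lambda>t. \<epsilon> - \<kappa> * \<alpha> * (- \<mu> t) powr (1 + \<alpha>)) has_real_derivative
      0 - \<kappa> * \<alpha> * ((1 + \<alpha>) * (- \<mu> t) powr (1 + \<alpha> - 1) * (- H\<epsilon> (\<mu> t)))) (at t)"
    using p_pos[of t] assms
    by (auto intro!: derivative_eq_intros mu_has_real_derivative simp: p_def)
  ultimately show ?thesis by (simp add: V'_def p_def mult.assoc)
qed

lemma grad2_us_2:
  assumes "fst x \<in> {0<..<L}"
  shows "grad2 (us \<kappa> \<alpha> \<delta> \<theta> \<epsilon>) x 2 = du2 (fst x) (snd x)"
proof -
  have "(\<lambda>t. us \<kappa> \<alpha> \<delta> \<theta> \<epsilon> (fst x, t)) = (\<lambda>t. \<theta> (fst x) * (- I (fst x) + 1/2 * t\<^sup>2 * V (fst x)))"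
    using us_eq assms by auto
  moreover have "((\<lambda>t. \<theta> (fst x) * (- I (fst x) + 1/2 * t\<^sup>2 * V (fst x))) has_real_derivative
      du2 (fst x) (snd x)) (at (snd x))"
    by (auto intro!: derivative_eq_intros simp: du2_def)
  ultimately show ?thesis
    by (simp add: grad2_def DERIV_imp_deriv)
qed

lemma grad2_us_1:
  assumes "fst x \<in> {0<..<L}"
  shows "grad2 (us \<kappa> \<alpha> \<delta> \<theta> \<epsilon>) x 1 = du1 (fst x) (snd x)"
proof -
  have "((\<lambda>t. \<theta> t * (- I t + 1/2 * (snd x)\<^sup>2 * V t)) has_real_derivative du1 (fst x) (snd x)) (at (fst x))"
    using assms
    by (auto intro!: derivative_eq_intros \<theta>_has_real_derivative I_has_real_derivative V_has_real_derivative
             simp: du1_def p_def algebra_simps)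
  then have "((\<lambda>t. us \<kappa> \<alpha> \<delta> \<theta> \<epsilon> (t, snd x)) has_real_derivative du1 (fst x) (snd x)) (at (fst x))"
    by (rule has_field_derivative_transform_within_open[where S="{0<..<L}"])
       (use assms us_eq in auto)
  then show ?thesis
    by (simp add: grad2_def DERIV_imp_deriv)
qed

lemma energy_density_eq:
  assumes "fst x \<in> {0<..<L}"
  shows "energy_density \<kappa> \<alpha> \<delta> \<theta> \<epsilon> x = energy x"
proof -
  have "H0' \<kappa> \<alpha> (mu \<kappa> \<alpha> \<delta> \<epsilon> (fst x)) = h (fst x)"
    using assms mu_eq[of "fst x"] mu_neg[of "fst x"] H0'_neg[of "\<mu> (fst x)" \<alpha> \<kappa>] \<alpha>_pos
    by (simp add: h_def p_def)
  then show ?thesis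
    unfolding energy_density_def Amat_def Let_def energy_def
    using grad2_us_1[OF assms] grad2_us_2[OF assms]
    by (simp add: power2_eq_square algebra_simps)
qed


lemma p_nonneg: "t \<in> {0..L} \<Longrightarrow> p t \<ge> 0"
  and p_le_pmax: "t \<in> {0..L} \<Longrightarrow> p t \<le> pmax"
  using mu_mem[of t] by (auto simp: p_def pmax_def)

lemma p_powr_le: "t \<in> {0..L} \<Longrightarrow> r \<ge> 0 \<Longrightarrow> p t powr r \<le> pmax powr r"
  using p_nonneg p_le_pmax by (intro powr_mono2) auto

lemma H_mu_le_Hmax: "\<epsilon> \<le> 1 \<Longrightarrow> t \<in> {0..L} \<Longrightarrow> H\<epsilon> (\<mu> t) \<le> Hmax"
  using p_powr_le[of t "1 + \<alpha>"] \<alpha>_pos \<kappa>_pos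
  by (simp add: H_mu Hmax_def add_mono mult_left_mono)

lemma abs_V_le: "t \<in> {0..L} \<Longrightarrow> \<bar>V t\<bar> \<le> (1 + \<alpha>) * H\<epsilon> (\<mu> t)"
  using \<epsilon>_pos \<alpha>_pos \<kappa>_pos by (simp add: V_def H_mu abs_le_iff algebra_simps)

lemma abs_V'_le: "t \<in> {0..L} \<Longrightarrow> \<bar>V' t\<bar> \<le> \<kappa> * \<alpha> * (1 + \<alpha>) * pmax powr \<alpha> * H\<epsilon> (\<mu> t)"
  using p_powr_le[of t \<alpha>] \<kappa>_pos \<alpha>_pos H_pos[of "\<mu> t"]
  by (simp add: V'_def abs_mult mult_left_mono mult_right_mono)

lemma abs_h_le: "t \<in> {0..L} \<Longrightarrow> \<bar>h t\<bar> \<le> hmax"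
  using p_powr_le[of t \<alpha>] \<kappa>_pos \<alpha>_pos by (simp add: h_def hmax_def abs_mult mult_left_mono)

lemma abs_I_le:
  assumes "t \<in> {0..L}"
  shows "\<bar>I t\<bar> \<le> pmax * t"
proof -
  have "norm (integral {0..t} \<mu>) \<le> integral {0..t} (\<lambda>_. pmax)"
  proof (rule integral_norm_bound_integral)
    show "\<mu> integrable_on {0..t}"
      using continuous_on_subset[OF continuous_on_mu] assms by (intro integrable_continuous_real) auto
  qed (use assms mu_mem p_le_pmax in \<open>auto simp: p_def\<close>)
  then show ?thesis using assms by (simp add: I_def mult.commute)
qed


lemma energy_far_bound:
  assumes \<epsilon>1: "\<epsilon> \<le> 1" and x: "x\<^sub>1 \<in> {0..L}" "x\<^sub>1 \<ge> 1" and y: "y \<in> {0..1}"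
  shows "\<bar>energy (x\<^sub>1, y) - (\<mu> x\<^sub>1)\<^sup>2\<bar> \<le> far_const * H\<epsilon> (\<mu> x\<^sub>1)"
proof -
  define c where "c = y\<^sup>2 * (1/2 * V' x\<^sub>1 - h x\<^sub>1 * V x\<^sub>1)"
  have "energy (x\<^sub>1, y) = (p x\<^sub>1 + c)\<^sup>2 + y\<^sup>2 * (V x\<^sub>1)\<^sup>2"
    using \<theta>_eq_1[OF x(2)] deriv_\<theta>_eq_0[OF x(2)]
    by (simp add: energy_def du1_def du2_def c_def power2_eq_square algebra_simps)
  moreover have "(\<mu> x\<^sub>1)\<^sup>2 = (p x\<^sub>1)\<^sup>2" by (simp add: p_def)
  moreover have y2: "y\<^sup>2 \<le> 1" "0 \<le> y\<^sup>2" using y by (auto simp: power_le_one)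
  moreover have "\<bar>c\<bar> \<le> far_coeff * H\<epsilon> (\<mu> x\<^sub>1)"
  proof -
    have "\<bar>c\<bar> \<le> \<bar>1/2 * V' x\<^sub>1 - h x\<^sub>1 * V x\<^sub>1\<bar>"
      using y2 by (simp add: c_def abs_mult mult_left_le_one_le)
    also have "\<dots> \<le> 1/2 * \<bar>V' x\<^sub>1\<bar> + \<bar>h x\<^sub>1\<bar> * \<bar>V x\<^sub>1\<bar>"
      using abs_triangle_ineq4[of "1/2 * V' x\<^sub>1" "h x\<^sub>1 * V x\<^sub>1"] by (simp add: abs_mult)
    also have "\<dots> \<le> 1/2 * (\<kappa> * \<alpha> * (1 + \<alpha>) * pmax powr \<alpha> * H\<epsilon> (\<mu> x\<^sub>1)) + hmax * ((1 + \<alpha>) * H\<epsilon> (\<mu> x\<^sub>1))"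
      using abs_V'_le[OF x(1)] abs_h_le[OF x(1)] abs_V_le[OF x(1)]
      by (intro add_mono mult_mono) auto
    also have "\<dots> = far_coeff * H\<epsilon> (\<mu> x\<^sub>1)"
      by (simp add: far_coeff_def hmax_def algebra_simps)
    finally show ?thesis .
  qed
  ultimately show ?thesis
    unfolding far_const_def
    using abs_square_perturbation_le[of "p x\<^sub>1" pmax c far_coeff "H\<epsilon> (\<mu> x\<^sub>1)" "V x\<^sub>1" "1 + \<alpha>" Hmax y]
      p_nonneg[OF x(1)] p_le_pmax[OF x(1)] abs_V_le[OF x(1)] H_pos[of "\<mu> x\<^sub>1"] H_mu_le_Hmax[OF \<epsilon>1 x(1)]
    by simp
qed

lemma energy_near_bound:
  assumes \<epsilon>1: "\<epsilon> \<le> 1" and x: "x\<^sub>1 \<in> {0..L}" "x\<^sub>1 \<le> 1" and y: "y \<in> {0..1}"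
  shows "\<bar>energy (x\<^sub>1, y) - (\<mu> x\<^sub>1)\<^sup>2\<bar> \<le> near_const"
proof -
  have x01: "x\<^sub>1 \<in> {0..1}" using x by auto
  have y2: "y\<^sup>2 \<le> 1" "0 \<le> y\<^sup>2" and y1: "\<bar>y\<bar> \<le> 1" using y by (auto simp: power_le_one)
  have HH: "H\<epsilon> (\<mu> x\<^sub>1) \<le> Hmax" using H_mu_le_Hmax[OF \<epsilon>1 x(1)] .
  have "(1 + \<alpha>) * H\<epsilon> (\<mu> x\<^sub>1) \<le> Vmax"
    using HH \<alpha>_pos unfolding Vmax_def by (intro mult_left_mono) auto
  with abs_V_le[OF x(1)] have V: "\<bar>V x\<^sub>1\<bar> \<le> Vmax" by linarith
  have "\<kappa> * \<alpha> * (1 + \<alpha>) * pmax powr \<alpha> * H\<epsilon> (\<mu> x\<^sub>1) \<le> V'max"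
    using HH \<kappa>_pos \<alpha>_pos unfolding V'max_def by (intro mult_left_mono) auto
  with abs_V'_le[OF x(1)] have V': "\<bar>V' x\<^sub>1\<bar> \<le> V'max" by linarith
  have I: "\<bar>I x\<^sub>1\<bar> \<le> pmax"
    using order_trans[OF abs_I_le[OF x(1)] mult_left_le[OF x(2) less_imp_le[OF pmax_pos]]] .
  have "\<bar>1/2 * y\<^sup>2 * V x\<^sub>1\<bar> \<le> Vmax / 2" "\<bar>1/2 * y\<^sup>2 * V' x\<^sub>1\<bar> \<le> V'max / 2"
    using abs_mult_le_mult[of "y\<^sup>2" 1 "V x\<^sub>1" Vmax] abs_mult_le_mult[of "y\<^sup>2" 1 "V' x\<^sub>1" V'max] y2 V V'
    by (simp_all add: abs_mult)
  then have A: "\<bar>- I x\<^sub>1 + 1/2 * y\<^sup>2 * V x\<^sub>1\<bar> \<le> pmax + Vmax / 2"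
    and B: "\<bar>p x\<^sub>1 + 1/2 * y\<^sup>2 * V' x\<^sub>1\<bar> \<le> pmax + V'max / 2"
    using I p_nonneg[OF x(1)] p_le_pmax[OF x(1)] unfolding abs_le_iff by linarith+
  have "\<bar>du1 x\<^sub>1 y\<bar> \<le> B\<theta> * (pmax + Vmax / 2) + B\<theta> * (pmax + V'max / 2)"
    unfolding du1_def
    by (rule order_trans[OF abs_triangle_ineq add_mono])
       (intro abs_mult_le_mult abs_deriv_\<theta>_le abs_\<theta>_le x01 A B)+
  then have du1: "\<bar>du1 x\<^sub>1 y\<bar> \<le> B\<theta> * (2 * pmax + Vmax / 2 + V'max / 2)"
    by (simp add: algebra_simps)
  have du2: "\<bar>du2 x\<^sub>1 y\<bar> \<le> B\<theta> * Vmax"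
    using abs_mult_le_mult[OF abs_mult_le_mult[OF abs_\<theta>_le[OF x01] y1] V] by (simp add: du2_def)
  have "\<bar>du1 x\<^sub>1 y - y * h x\<^sub>1 * du2 x\<^sub>1 y\<bar> \<le> B\<theta> * (2 * pmax + Vmax / 2 + V'max / 2) + hmax * (B\<theta> * Vmax)"
    using du1 abs_mult_le_mult[OF abs_mult_le_mult[OF y1 abs_h_le[OF x(1)]] du2] by (simp add: abs_le_iff)
  moreover have "\<bar>\<mu> x\<^sub>1\<bar> \<le> pmax"
    using p_nonneg[OF x(1)] p_le_pmax[OF x(1)] by (simp add: p_def)
  ultimately have "(du1 x\<^sub>1 y - y * h x\<^sub>1 * du2 x\<^sub>1 y)\<^sup>2
      \<le> (B\<theta> * (2 * pmax + Vmax / 2 + V'max / 2) + hmax * (B\<theta> * Vmax))\<^sup>2"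
    "(du2 x\<^sub>1 y)\<^sup>2 \<le> (B\<theta> * Vmax)\<^sup>2" "(\<mu> x\<^sub>1)\<^sup>2 \<le> pmax\<^sup>2"
    using du2 by (simp_all add: power2_le_of_abs_le)
  then show ?thesis
    unfolding energy_def near_const_def fst_conv snd_conv abs_le_iff
    using zero_le_power2[of "\<mu> x\<^sub>1"] zero_le_power2[of "du2 x\<^sub>1 y"]
      zero_le_power2[of "du1 x\<^sub>1 y - y * h x\<^sub>1 * du2 x\<^sub>1 y"] by linarith
qed


text \<open>The bound for \<open>x\<^sub>1 \<le> 1\<close> is spread out as the continuous majorant \<open>4 C / (1 + x\<^sub>1)\<^sup>2\<close>,
  whose integral over \<open>[0, \<ell>\<^sub>\<epsilon>]\<close> stays below \<open>4 C\<close> however large \<open>\<ell>\<^sub>\<epsilon>\<close> is.\<close>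
lemma energy_bound:
  assumes "\<epsilon> \<le> 1" and x: "x\<^sub>1 \<in> {0..L}" and y: "y \<in> {0..1}"
  shows "\<bar>energy (x\<^sub>1, y) - (\<mu> x\<^sub>1)\<^sup>2\<bar> \<le> 4 * near_const / (1 + x\<^sub>1)\<^sup>2 + far_const * H\<epsilon> (\<mu> x\<^sub>1)"
proof (cases "x\<^sub>1 \<le> 1")
  case True
  have "(1 + x\<^sub>1)\<^sup>2 \<le> 2\<^sup>2" using True x by (intro power_mono) auto
  from mult_right_mono[OF this near_const_nonneg]
  have "near_const * (1 + x\<^sub>1)\<^sup>2 \<le> 4 * near_const" by (simp add: mult.commute)
  then have "near_const \<le> 4 * near_const / (1 + x\<^sub>1)\<^sup>2"
    using x by (simp add: le_divide_eq add_nonneg_pos)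
  moreover have "far_const * H\<epsilon> (\<mu> x\<^sub>1) \<ge> 0"
    using far_const_nonneg H_pos[of "\<mu> x\<^sub>1"] by simp
  ultimately show ?thesis using energy_near_bound[OF assms(1) x True y] by linarith
next
  case False
  have "4 * near_const / (1 + x\<^sub>1)\<^sup>2 \<ge> 0" using near_const_nonneg by simp
  then show ?thesis using energy_far_bound[OF assms(1) x _ y] False by simp
qed

abbreviation "box01 \<equiv> cbox (0::real, 0::real) (L, 1)"

lemma continuous_on_box_fst:
  "continuous_on {0..L} f \<Longrightarrow> continuous_on box01 (\<lambda>x. f (fst x))"
  by (rule continuous_on_compose2[of "{0..L}" f box01 fst]) (auto intro!: continuous_on_fst continuous_on_id simp: cbox_Pair_eq)

lemma integral_box_fst:
  "continuous_on {0..L} (f :: real \<Rightarrow> real) \<Longrightarrow> integral box01 (\<lambda>x. f (fst x)) = integral {0..L} f"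
  using integral_prod_continuous[OF continuous_on_box_fst] by simp

lemma continuous_on_p_powr: "r > 0 \<Longrightarrow> continuous_on {0..L} (\<lambda>t. p t powr r)"
  using continuous_on_mu p_nonneg unfolding p_def[abs_def]
  by (intro continuous_on_powr' continuous_intros) auto

lemma continuous_on_energy: "continuous_on box01 energy"
proof -
  have H: "continuous_on {0..L} (\<lambda>t. H\<epsilon> (\<mu> t))"
    using continuous_on_compose2[OF continuous_on_H continuous_on_mu, of UNIV] by simp
  have "continuous_on {0..L} V" "continuous_on {0..L} V'" "continuous_on {0..L} h"
    unfolding V_def[abs_def] V'_def[abs_def] h_def[abs_def] using \<alpha>_pos
    by (intro continuous_on_diff continuous_on_mult continuous_on_const continuous_on_p_powr H; simp)+
  moreover have "continuous_on {0..L} p"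
    unfolding p_def[abs_def] by (intro continuous_intros continuous_on_mu)
  moreover have "continuous_on {0..L} I"
    unfolding I_def[abs_def] by (intro indefinite_integral_continuous_1 integrable_continuous_real continuous_on_mu)
  ultimately show ?thesis
    unfolding energy_def du1_def du2_def
    by (intro continuous_intros continuous_on_box_fst continuous_on_\<theta> continuous_on_deriv_\<theta>)
qed

lemma Rect_eq_box: "Rect \<kappa> \<alpha> \<delta> \<epsilon> = box (0, 0) (L, 1)"
  by (auto simp: Rect_def ell_eq_L box_def Basis_prod_def inner_prod_def)

lemma energy_density_integrable: "set_integrable lborel (Rect \<kappa> \<alpha> \<delta> \<epsilon>) (energy_density \<kappa> \<alpha> \<delta> \<theta> \<epsilon>)"
  and integral_energy_density:
    "(LINT x : Rect \<kappa> \<alpha> \<delta> \<epsilon> | lborel. energy_density \<kappa> \<alpha> \<delta> \<theta> \<epsilon> x) = integral box01 energy"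
proof -
  have "set_integrable lborel box01 energy"
    unfolding set_integrable_def by (intro borel_integrable_compact compact_cbox continuous_on_energy)
  then have int: "set_integrable lborel (Rect \<kappa> \<alpha> \<delta> \<epsilon>) energy"
    unfolding Rect_eq_box by (rule set_integrable_subset[OF _ _ box_subset_cbox]) simp
  have eq: "x \<in> Rect \<kappa> \<alpha> \<delta> \<epsilon> \<Longrightarrow> energy_density \<kappa> \<alpha> \<delta> \<theta> \<epsilon> x = energy x" for x
    by (rule energy_density_eq) (auto simp: Rect_def ell_eq_L mem_Times_iff)
  show "set_integrable lborel (Rect \<kappa> \<alpha> \<delta> \<epsilon>) (energy_density \<kappa> \<alpha> \<delta> \<theta> \<epsilon>)"
    using int by (rule set_integrable_cong[THEN iffD1, rotated 3]) (auto simp: eq)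
  have "(LINT x : Rect \<kappa> \<alpha> \<delta> \<epsilon> | lborel. energy_density \<kappa> \<alpha> \<delta> \<theta> \<epsilon> x)
      = (LINT x : Rect \<kappa> \<alpha> \<delta> \<epsilon> | lborel. energy x)"
    by (rule set_lebesgue_integral_cong) (auto simp: eq Rect_eq_box)
  also have "\<dots> = integral (Rect \<kappa> \<alpha> \<delta> \<epsilon>) energy"
    by (rule set_borel_integral_eq_integral[OF int])
  also have "\<dots> = integral box01 energy"
    unfolding Rect_eq_box by (rule integral_open_interval)
  finally show "(LINT x : Rect \<kappa> \<alpha> \<delta> \<epsilon> | lborel. energy_density \<kappa> \<alpha> \<delta> \<theta> \<epsilon> x) = integral box01 energy" .
qed


lemma energy_close_to_integral_mu_sq:
  assumes \<epsilon>1: "\<epsilon> \<le> 1"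
  shows "\<bar>(LINT x : Rect \<kappa> \<alpha> \<delta> \<epsilon> | lborel. energy_density \<kappa> \<alpha> \<delta> \<theta> \<epsilon> x) - integral {0..L} (\<lambda>t. (\<mu> t)\<^sup>2)\<bar>
           \<le> 4 * near_const + far_const * pmax"
proof -
  define B where "B t = 4 * near_const * (1 / (1 + t)\<^sup>2) + far_const * H\<epsilon> (\<mu> t)" for t
  have cH: "continuous_on {0..L} (\<lambda>t. H\<epsilon> (\<mu> t))"
    using continuous_on_compose2[OF continuous_on_H continuous_on_mu, of UNIV] by simp
  have c_inv: "continuous_on {0..L} (\<lambda>t. 1 / (1 + t)\<^sup>2)"
    by (intro continuous_intros) (auto simp: add_nonneg_eq_0_iff)
  have cB: "continuous_on {0..L} B"
    unfolding B_def by (intro continuous_intros c_inv cH)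
  have cm: "continuous_on {0..L} (\<lambda>t. (\<mu> t)\<^sup>2)"
    by (intro continuous_intros continuous_on_mu)
  have int_energy: "energy integrable_on box01"
    by (intro integrable_continuous continuous_on_energy)
  have int_mu: "(\<lambda>x. (\<mu> (fst x))\<^sup>2) integrable_on box01"
    by (intro integrable_continuous continuous_on_box_fst cm)
  have "\<bar>integral box01 energy - integral box01 (\<lambda>x. (\<mu> (fst x))\<^sup>2)\<bar>
      = norm (integral box01 (\<lambda>x. energy x - (\<mu> (fst x))\<^sup>2))"
    by (simp add: integral_diff[OF int_energy int_mu])
  also have "\<dots> \<le> integral box01 (\<lambda>x. B (fst x))"
  proof (rule integral_norm_bound_integral)
    show "(\<lambda>x. energy x - (\<mu> (fst x))\<^sup>2) integrable_on box01"
      using int_energy int_mu by (rule integrable_diff)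
    show "(\<lambda>x. B (fst x)) integrable_on box01"
      by (intro integrable_continuous continuous_on_box_fst cB)
    fix x assume "x \<in> box01"
    then show "norm (energy x - (\<mu> (fst x))\<^sup>2) \<le> B (fst x)"
      using energy_bound[OF \<epsilon>1, of "fst x" "snd x"] by (simp add: B_def cbox_Pair_eq mem_Times_iff)
  qed
  also have "\<dots> = integral {0..L} B"
    by (rule integral_box_fst[OF cB])
  also have "\<dots> = 4 * near_const * integral {0..L} (\<lambda>t. 1 / (1 + t)\<^sup>2) + far_const * integral {0..L} (\<lambda>t. H\<epsilon> (\<mu> t))"
    unfolding B_def
    by (simp only: integral_mult_right integral_add[OF
          integrable_continuous_real[OF continuous_on_mult[OF continuous_on_const c_inv]]
          integrable_continuous_real[OF continuous_on_mult[OF continuous_on_const cH]]])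
  also have "\<dots> \<le> 4 * near_const + far_const * pmax"
    using mult_left_mono[OF integral_inverse_square_le_1, of L "4 * near_const"] L_pos near_const_nonneg
    by (simp add: integral_H_mu pmax_def)
  finally show ?thesis
    using integral_energy_density integral_box_fst[OF cm] by simp
qed

end

context cutoff_profile
begin

lemma energy_close_to_integral_mu_sq_uniform:
  "\<exists>C. \<forall>\<epsilon>\<in>{0<..1}. set_integrable lborel (Rect \<kappa> \<alpha> \<delta> \<epsilon>) (energy_density \<kappa> \<alpha> \<delta> \<theta> \<epsilon>)
      \<and> \<bar>(LINT x : Rect \<kappa> \<alpha> \<delta> \<epsilon> | lborel. energy_density \<kappa> \<alpha> \<delta> \<theta> \<epsilon> x)
           - integral {0..ell \<kappa> \<alpha> \<delta> \<epsilon>} (\<lambda>t. (mu \<kappa> \<alpha> \<delta> \<epsilon> t)\<^sup>2)\<bar> \<le> C"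
proof (intro exI ballI)
  fix \<epsilon> :: real assume "\<epsilon> \<in> {0<..1}"
  then interpret regularized_cutoff \<kappa> \<alpha> \<delta> \<epsilon> \<theta>
    by unfold_locales auto
  show "set_integrable lborel (Rect \<kappa> \<alpha> \<delta> \<epsilon>) (energy_density \<kappa> \<alpha> \<delta> \<theta> \<epsilon>)
      \<and> \<bar>(LINT x : Rect \<kappa> \<alpha> \<delta> \<epsilon> | lborel. energy_density \<kappa> \<alpha> \<delta> \<theta> \<epsilon> x)
           - integral {0..ell \<kappa> \<alpha> \<delta> \<epsilon>} (\<lambda>t. (mu \<kappa> \<alpha> \<delta> \<epsilon> t)\<^sup>2)\<bar> \<le> 4 * near_const + far_const * pmax"
    using energy_density_integrable energy_close_to_integral_mu_sq \<open>\<epsilon> \<in> {0<..1}\<close>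
    by (simp add: integral_mu_sq)
qed

end

section \<open>Asymptotics\<close>

context profile
begin

lemma integral_mu_sq_asymp_alpha_2:
  assumes "\<alpha> = 2"
  shows "(\<lambda>\<epsilon>. integral {0..ell \<kappa> \<alpha> \<delta> \<epsilon>} (\<lambda>t. (mu \<kappa> \<alpha> \<delta> \<epsilon> t)\<^sup>2)) \<sim>[at_right 0] (\<lambda>\<epsilon>. 1/3 * (1/\<kappa>) * \<bar>ln \<epsilon>\<bar>)"
proof -
  have "\<forall>\<^sub>F \<epsilon> in at_right 0. integral {0..ell \<kappa> \<alpha> \<delta> \<epsilon>} (\<lambda>t. (mu \<kappa> \<alpha> \<delta> \<epsilon> t)\<^sup>2)
      = (ln (\<kappa> * (-\<delta>) ^ 3 + \<epsilon>) - ln \<epsilon>) / (3 * \<kappa>)"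
  proof (rule eventually_at_right_less[THEN eventually_mono])
    fix \<epsilon> :: real assume "0 < \<epsilon>"
    then interpret regularized_profile \<kappa> \<alpha> \<delta> \<epsilon> by unfold_locales
    show "integral {0..ell \<kappa> \<alpha> \<delta> \<epsilon>} (\<lambda>t. (mu \<kappa> \<alpha> \<delta> \<epsilon> t)\<^sup>2) = (ln (\<kappa> * (-\<delta>) ^ 3 + \<epsilon>) - ln \<epsilon>) / (3 * \<kappa>)"
      using integral_mu_sq integral_mu_sq_alpha_2[OF assms] by simp
  qed
  then have "(\<lambda>\<epsilon>. integral {0..ell \<kappa> \<alpha> \<delta> \<epsilon>} (\<lambda>t. (mu \<kappa> \<alpha> \<delta> \<epsilon> t)\<^sup>2))
      \<sim>[at_right 0] (\<lambda>\<epsilon>. (ln (\<kappa> * (-\<delta>) ^ 3 + \<epsilon>) - ln \<epsilon>) / (3 * \<kappa>))"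
    by (rule asymp_equiv_refl_ev)
  also have "\<dots> \<sim>[at_right 0] (\<lambda>\<epsilon>. 1/3 * (1/\<kappa>) * \<bar>ln \<epsilon>\<bar>)"
  proof (rule asymp_equivI')
    define c where "c = \<kappa> * (-\<delta>) ^ 3"
    have "c > 0" unfolding c_def using \<kappa>_pos \<delta>_neg by (intro mult_pos_pos zero_less_power) auto
    then have "((\<lambda>\<epsilon>. (ln (c + \<epsilon>) - ln \<epsilon>) / (3 * \<kappa>) / (1/3 * (1/\<kappa>) * \<bar>ln \<epsilon>\<bar>)) \<longlongrightarrow> 1) (at_right 0)"
      using \<kappa>_pos by real_asymp
    then show "((\<lambda>\<epsilon>. (ln (\<kappa> * (-\<delta>) ^ 3 + \<epsilon>) - ln \<epsilon>) / (3 * \<kappa>) / (1/3 * (1/\<kappa>) * \<bar>ln \<epsilon>\<bar>))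
        \<longlongrightarrow> 1) (at_right 0)"
      by (simp add: c_def)
  qed
  finally show ?thesis .
qed

lemma integral_mu_sq_asymp_alpha_gt_2:
  assumes "\<alpha> > 2"
  shows "(\<lambda>\<epsilon>. integral {0..ell \<kappa> \<alpha> \<delta> \<epsilon>} (\<lambda>t. (mu \<kappa> \<alpha> \<delta> \<epsilon> t)\<^sup>2)) \<sim>[at_right 0]
    (\<lambda>\<epsilon>. 1/3 * \<epsilon> powr (3/(1+\<alpha>) - 1) * \<kappa> powr (-(3/(1+\<alpha>))) * ((3*pi/(1+\<alpha>)) / sin (3*pi/(1+\<alpha>))))"
proof -
  define s where "s = 3 / (1 + \<alpha>)"
  define c where "c = \<kappa> * (-\<delta>) powr (1 + \<alpha>)"
  have s: "0 < s" "s < 1" using assms by (auto simp: s_def)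
  have "c > 0" using \<kappa>_pos \<delta>_neg by (simp add: c_def)
  have "\<forall>\<^sub>F \<epsilon> in at_right 0. integral {0..ell \<kappa> \<alpha> \<delta> \<epsilon>} (\<lambda>t. (mu \<kappa> \<alpha> \<delta> \<epsilon> t)\<^sup>2)
      = \<kappa> powr (-s) * \<epsilon> powr (s - 1) / (1 + \<alpha>) * incomplete_Beta s (1 - s) (c / (c + \<epsilon>))"
  proof (rule eventually_at_right_less[THEN eventually_mono])
    fix \<epsilon> :: real assume "0 < \<epsilon>"
    then interpret regularized_profile \<kappa> \<alpha> \<delta> \<epsilon> by unfold_locales
    show "integral {0..ell \<kappa> \<alpha> \<delta> \<epsilon>} (\<lambda>t. (mu \<kappa> \<alpha> \<delta> \<epsilon> t)\<^sup>2)
      = \<kappa> powr (-s) * \<epsilon> powr (s - 1) / (1 + \<alpha>) * incomplete_Beta s (1 - s) (c / (c + \<epsilon>))"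
      using integral_mu_sq integral_mu_sq_alpha_gt_2[OF assms] by (simp add: s_def c_def)
  qed
  then have "(\<lambda>\<epsilon>. integral {0..ell \<kappa> \<alpha> \<delta> \<epsilon>} (\<lambda>t. (mu \<kappa> \<alpha> \<delta> \<epsilon> t)\<^sup>2)) \<sim>[at_right 0]
      (\<lambda>\<epsilon>. \<kappa> powr (-s) * \<epsilon> powr (s - 1) / (1 + \<alpha>) * incomplete_Beta s (1 - s) (c / (c + \<epsilon>)))"
    by (rule asymp_equiv_refl_ev)
  also have "\<dots> \<sim>[at_right 0] (\<lambda>\<epsilon>. \<kappa> powr (-s) * \<epsilon> powr (s - 1) / (1 + \<alpha>) * Beta s (1 - s))"
  proof (intro asymp_equiv_intros tendsto_imp_asymp_equiv_const)
    have "((\<lambda>\<epsilon>. c / (c + \<epsilon>)) \<longlongrightarrow> 1) (at_right 0)"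
      using \<open>c > 0\<close> by (auto intro!: tendsto_eq_intros)
    moreover have "\<forall>\<^sub>F \<epsilon> in at_right 0. c / (c + \<epsilon>) \<in> {0..1}"
      using eventually_at_right_less by eventually_elim (use \<open>c > 0\<close> in auto)
    ultimately have "((\<lambda>\<epsilon>. incomplete_Beta s (1 - s) (c / (c + \<epsilon>))) \<longlongrightarrow> incomplete_Beta s (1 - s) 1) (at_right 0)"
      using s by (intro continuous_on_tendsto_compose[OF continuous_on_incomplete_Beta]) auto
    then show "((\<lambda>\<epsilon>. incomplete_Beta s (1 - s) (c / (c + \<epsilon>))) \<longlongrightarrow> Beta s (1 - s)) (at_right 0)"
      using s by (simp add: incomplete_Beta_1)
    have "sin (pi * s) > 0"
      using s by (intro sin_gt_zero) auto
    then show "Beta s (1 - s) \<noteq> 0"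
      using s by (simp add: Beta_reflection)
  qed
  also have "(\<lambda>\<epsilon>. \<kappa> powr (-s) * \<epsilon> powr (s - 1) / (1 + \<alpha>) * Beta s (1 - s))
      = (\<lambda>\<epsilon>. 1/3 * \<epsilon> powr (3/(1+\<alpha>) - 1) * \<kappa> powr (-(3/(1+\<alpha>))) * ((3*pi/(1+\<alpha>)) / sin (3*pi/(1+\<alpha>))))"
  proof -
    have "3 * pi / (1 + \<alpha>) = pi * s" "1 + \<alpha> = 3 / s"
      using assms by (auto simp: s_def)
    then show ?thesis
      unfolding s_def[symmetric] by (simp add: Beta_reflection[OF s] fun_eq_iff)
  qed
  finally show ?thesis .
qed

lemma integral_mu_sq_asymp:
  assumes "\<alpha> \<ge> 2"
  defines "f \<equiv> \<lambda>\<epsilon>. if \<alpha> = 2 then 1/3 * (1/\<kappa>) * \<bar>ln \<epsilon>\<bar>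
            else 1/3 * \<epsilon> powr (3/(1+\<alpha>) - 1) * \<kappa> powr (-(3/(1+\<alpha>)))
                 * ((3*pi/(1+\<alpha>)) / sin (3*pi/(1+\<alpha>)))"
  shows "(\<lambda>\<epsilon>. integral {0..ell \<kappa> \<alpha> \<delta> \<epsilon>} (\<lambda>t. (mu \<kappa> \<alpha> \<delta> \<epsilon> t)\<^sup>2)) \<sim>[at_right 0] f"
    and "filterlim f at_top (at_right 0)"
proof -
  have "(\<lambda>\<epsilon>. integral {0..ell \<kappa> \<alpha> \<delta> \<epsilon>} (\<lambda>t. (mu \<kappa> \<alpha> \<delta> \<epsilon> t)\<^sup>2)) \<sim>[at_right 0] f
      \<and> filterlim f at_top (at_right 0)"
  proof (cases "\<alpha> = 2")
    case True
    have "filterlim (\<lambda>\<epsilon>::real. 1/3 * (1/\<kappa>) * \<bar>ln \<epsilon>\<bar>) at_top (at_right 0)"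
      using \<kappa>_pos by real_asymp
    then show ?thesis
      using integral_mu_sq_asymp_alpha_2[OF True] True by (simp add: f_def)
  next
    case False
    define s where "s = 3 / (1 + \<alpha>)"
    define K where "K = 1/3 * \<kappa> powr (-s) * ((pi * s) / sin (pi * s))"
    have s: "0 < s" "s < 1" using False assms by (auto simp: s_def)
    have "sin (pi * s) > 0" using s by (intro sin_gt_zero) auto
    then have "K > 0" using s \<kappa>_pos by (simp add: K_def)
    then have "filterlim (\<lambda>\<epsilon>. K * \<epsilon> powr (s - 1)) at_top (at_right 0)"
      using s by real_asymp
    moreover have "f = (\<lambda>\<epsilon>. K * \<epsilon> powr (s - 1))"
      using False by (simp add: f_def K_def s_def fun_eq_iff mult_ac)
    ultimately show ?thesis
      using integral_mu_sq_asymp_alpha_gt_2 False assms by (simp add: f_def)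
  qed
  then show "(\<lambda>\<epsilon>. integral {0..ell \<kappa> \<alpha> \<delta> \<epsilon>} (\<lambda>t. (mu \<kappa> \<alpha> \<delta> \<epsilon> t)\<^sup>2)) \<sim>[at_right 0] f"
    and "filterlim f at_top (at_right 0)" by auto
qed

end

theorem lemma6p3:
  fixes \<kappa> \<alpha> \<delta> :: real and \<theta> :: "real \<Rightarrow> real"
  assumes "\<kappa> > 0" "\<alpha> \<ge> 2" "\<delta> < 0"
    and "smooth \<theta>" "\<forall>t \<le> 0. \<theta> t = 0" "\<forall>t \<ge> 1. \<theta> t = 1"
  shows "(\<forall>\<^sub>F \<epsilon> in at_right 0.
            set_integrable lborel (Rect \<kappa> \<alpha> \<delta> \<epsilon>) (energy_density \<kappa> \<alpha> \<delta> \<theta> \<epsilon>))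
    \<and> (\<lambda>\<epsilon>. LINT x : Rect \<kappa> \<alpha> \<delta> \<epsilon> | lborel. energy_density \<kappa> \<alpha> \<delta> \<theta> \<epsilon> x)
        \<sim>[at_right 0]
      (\<lambda>\<epsilon>. if \<alpha> = 2 then 1/3 * (1/\<kappa>) * \<bar>ln \<epsilon>\<bar>
            else 1/3 * \<epsilon> powr (3/(1+\<alpha>) - 1) * \<kappa> powr (-(3/(1+\<alpha>)))
                 * ((3*pi/(1+\<alpha>)) / sin (3*pi/(1+\<alpha>))))"
proof -
  interpret cutoff_profile \<kappa> \<alpha> \<delta> \<theta>
    using assms by unfold_locales auto
  obtain C where C: "\<forall>\<epsilon>\<in>{0<..1}. set_integrable lborel (Rect \<kappa> \<alpha> \<delta> \<epsilon>) (energy_density \<kappa> \<alpha> \<delta> \<theta> \<epsilon>)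
      \<and> \<bar>(LINT x : Rect \<kappa> \<alpha> \<delta> \<epsilon> | lborel. energy_density \<kappa> \<alpha> \<delta> \<theta> \<epsilon> x)
           - integral {0..ell \<kappa> \<alpha> \<delta> \<epsilon>} (\<lambda>t. (mu \<kappa> \<alpha> \<delta> \<epsilon> t)\<^sup>2)\<bar> \<le> C"
    using energy_close_to_integral_mu_sq_uniform by blast
  have "\<forall>\<^sub>F \<epsilon> in at_right 0. \<epsilon> \<in> {0<..<(1::real)}"
    by (rule eventually_at_right_real) simp
  then have small: "\<forall>\<^sub>F \<epsilon> in at_right 0. \<epsilon> \<in> {0<..(1::real)}"
    by eventually_elim auto
  have integrable: "\<forall>\<^sub>F \<epsilon> in at_right 0. set_integrable lborel (Rect \<kappa> \<alpha> \<delta> \<epsilon>) (energy_density \<kappa> \<alpha> \<delta> \<theta> \<epsilon>)"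
    using small by eventually_elim (use C in blast)
  have close: "\<forall>\<^sub>F \<epsilon> in at_right 0. \<bar>(LINT x : Rect \<kappa> \<alpha> \<delta> \<epsilon> | lborel. energy_density \<kappa> \<alpha> \<delta> \<theta> \<epsilon> x)
      - integral {0..ell \<kappa> \<alpha> \<delta> \<epsilon>} (\<lambda>t. (mu \<kappa> \<alpha> \<delta> \<epsilon> t)\<^sup>2)\<bar> \<le> C"
    using small by eventually_elim (use C in blast)
  show ?thesis
    using integrable asymp_equiv_bounded_perturbation[OF close integral_mu_sq_asymp[OF assms(2)]] by blast
qed

end
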